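(* Let $\mathcal{L}$ be a Lindbladian on $\mathbb{C}^d$, and let $\mathcal{S}=\{\mathcal{E}_1,\dots,\mathcal{E}_k\}$ be a finite set of linearly independent quantum channels on operators on $\mathbb{C}^d$. Suppose that (1) the identity map $\mathcal{I}$ lies in the convex hull $\mathrm{conv}[\mathcal{S}]$, and (2) there is a $k\times k$ $Q$-matrix $Q=(q_{ij})$ such that $\mathcal{L}\circ\mathcal{E}_i=\sum_{j=1}^k q_{ji}\,\mathcal{E}_j$ for every $i$. Then the dynamical semigroup $\Phi_t=e^{t\mathcal{L}}$ satisfies $\Phi_t\in\mathrm{conv}[\mathcal{S}]$ for all $t\ge0$.
   Context: A Lindbladian has GKSL form and generates the CPTP semigroup $(e^{t\mathcal{L}})_{t\ge0}$. A $k\times k$ $Q$-matrix (reversed transition-rate matrix) is a real matrix $Q=(q_{ij})$ with $q_{ij}\ge0$ for all $i\neq j$, finite diagonal entries, and each column summing to zero: $\sum_{i}q_{ij}=0$ for every $j$ (so $q_{jj}=-\sum_{i\neq j}q_{ij}\le0$). *)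

theory Defs
  imports "HOL-Analysis.Analysis"
begin

text \<open>Operators on C^d are d x d complex matrices of type complex^'d^'d;
  superoperators are arbitrary maps on them (linearity is imposed where needed).\<close>

type_synonym 'd cmat = "complex^'d^'d"
type_synonym 'd superop = "'d cmat \<Rightarrow> 'd cmat"

definition adj :: "'d::finite cmat \<Rightarrow> 'd cmat" where
  "adj A = (\<chi> i j. cnj (A $ j $ i))"

definition mtrace :: "'d::finite cmat \<Rightarrow> complex" where
  "mtrace A = (\<Sum>i\<in>UNIV. A $ i $ i)"

definition cscale :: "complex \<Rightarrow> 'd::finite cmat \<Rightarrow> 'd cmat" where
  "cscale c A = (\<chi> i j. c * A $ i $ j)"

definition clinear_superop :: "'d::finite superop \<Rightarrow> bool" where
  "clinear_superop E \<longleftrightarrow> (\<forall>X Y. E (X + Y) = E X + E Y) \<and> (\<forall>c X. E (cscale c X) = cscale c (E X))"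

text \<open>Positive semidefiniteness of an n x n block matrix with d x d blocks X a b
  (i.e. an nd x nd matrix), via its quadratic form.\<close>
definition psd_block :: "nat \<Rightarrow> (nat \<Rightarrow> nat \<Rightarrow> 'd::finite cmat) \<Rightarrow> bool" where
  "psd_block n X \<longleftrightarrow> (\<forall>v :: nat \<Rightarrow> complex^'d.
     (let s = (\<Sum>a<n. \<Sum>b<n. \<Sum>i\<in>UNIV. cnj (v a $ i) * ((X a b) *v (v b)) $ i)
      in Im s = 0 \<and> Re s \<ge> 0))"

text \<open>Complete positivity: id_n \<otimes> E is positive for every n.\<close>
definition completely_positive :: "'d::finite superop \<Rightarrow> bool" where
  "completely_positive E \<longleftrightarrow> (\<forall>n X. psd_block n X \<longrightarrow> psd_block n (\<lambda>a b. E (X a b)))"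

definition trace_preserving :: "'d::finite superop \<Rightarrow> bool" where
  "trace_preserving E \<longleftrightarrow> (\<forall>X. mtrace (E X) = mtrace X)"

definition quantum_channel :: "'d::finite superop \<Rightarrow> bool" where
  "quantum_channel E \<longleftrightarrow> clinear_superop E \<and> completely_positive E \<and> trace_preserving E"

definition lindbladian :: "'d::finite superop \<Rightarrow> bool" where
  "lindbladian L \<longleftrightarrow> (\<exists>(H::'d cmat) (Ls::'d cmat list). adj H = H \<and>
     (\<forall>\<rho>. L \<rho> = cscale (- \<i>) (H ** \<rho> - \<rho> ** H) +
        sum_list (map (\<lambda>A. A ** \<rho> ** adj A
                     - (1/2::real) *\<^sub>R (adj A ** A ** \<rho> + \<rho> ** (adj A ** A))) Ls)))"

definition sgexp :: "real \<Rightarrow> 'd::finite superop \<Rightarrow> 'd superop" where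
  "sgexp t L = (\<lambda>X. \<Sum>n. (t ^ n / fact n) *\<^sub>R (L ^^ n) X)"

definition lin_indep_superops :: "nat \<Rightarrow> (nat \<Rightarrow> 'd::finite superop) \<Rightarrow> bool" where
  "lin_indep_superops k E \<longleftrightarrow>
     (\<forall>c::nat \<Rightarrow> complex. (\<forall>X. (\<Sum>i<k. cscale (c i) (E i X)) = 0) \<longrightarrow> (\<forall>i<k. c i = 0))"

definition in_conv :: "'d::finite superop \<Rightarrow> nat \<Rightarrow> (nat \<Rightarrow> 'd superop) \<Rightarrow> bool" where
  "in_conv \<Phi> k E \<longleftrightarrow> (\<exists>p::nat \<Rightarrow> real. (\<forall>i<k. p i \<ge> 0) \<and> (\<Sum>i<k. p i) = 1 \<and>
      (\<forall>X. \<Phi> X = (\<Sum>i<k. p i *\<^sub>R E i X)))"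

text \<open>k x k Q-matrix (reversed transition-rate matrix): nonnegative off-diagonal, zero column sums.\<close>
definition Q_matrix :: "nat \<Rightarrow> (nat \<Rightarrow> nat \<Rightarrow> real) \<Rightarrow> bool" where
  "Q_matrix k q \<longleftrightarrow> (\<forall>i<k. \<forall>j<k. i \<noteq> j \<longrightarrow> q i j \<ge> 0) \<and> (\<forall>j<k. (\<Sum>i<k. q i j) = 0)"

end

theory Submission
  imports Defs
begin

text \<open>The intertwining relation makes \<open>L\<close> act on coefficient vectors with respect to the
  channels \<open>E i\<close> as the matrix \<open>Q\<close> does. Writing the identity as \<open>\<Sum>i. p i *\<^sub>R E i\<close>
  therefore gives \<open>exp (t L) = \<Sum>j. (exp (t Q) p) j *\<^sub>R E j\<close>, and \<open>exp (t Q) p\<close> is again a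
  probability vector: zero column sums preserve its total mass, and for \<open>c \<ge> max |q j j|\<close>
  the matrix \<open>Q + c I\<close> is entrywise nonnegative, so \<open>exp (t Q) p = exp (-c t) exp (t (Q + c I)) p \<ge> 0\<close>.\<close>

lemma sum_binomial_Suc:
  fixes x :: "'a::comm_ring_1" and g :: "nat \<Rightarrow> 'a"
  shows "(\<Sum>i\<le>n. of_nat (n choose i) * x ^ (n - i) * (g (Suc i) + x * g i)) =
         (\<Sum>i\<le>Suc n. of_nat (Suc n choose i) * x ^ (Suc n - i) * g i)"
proof -
  have "(\<Sum>i\<le>Suc n. of_nat (Suc n choose i) * x ^ (Suc n - i) * g i) =
      x ^ Suc n * g 0 + (\<Sum>i\<le>n. of_nat (Suc n choose Suc i) * x ^ (n - i) * g (Suc i))"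
    by (subst sum.atMost_Suc_shift) simp
  also have "\<dots> = x ^ Suc n * g 0 + (\<Sum>i\<le>n. of_nat (n choose Suc i) * x ^ (n - i) * g (Suc i))
      + (\<Sum>i\<le>n. of_nat (n choose i) * x ^ (n - i) * g (Suc i))"
    by (simp add: sum.distrib[symmetric] algebra_simps)
  also have "x ^ Suc n * g 0 + (\<Sum>i\<le>n. of_nat (n choose Suc i) * x ^ (n - i) * g (Suc i)) =
      (\<Sum>i\<le>Suc n. of_nat (n choose i) * x ^ (Suc n - i) * g i)"
    by (subst sum.atMost_Suc_shift) simp
  also have "\<dots> = (\<Sum>i\<le>n. of_nat (n choose i) * x ^ (n - i) * (x * g i))"
    by (simp add: Suc_diff_le binomial_eq_0 algebra_simps)
  finally show ?thesis
    by (simp add: sum.distrib[symmetric] algebra_simps)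
qed

lemma sums_exp_binomial_transform:
  fixes r :: "nat \<Rightarrow> real"
  assumes summable: "summable (\<lambda>n. \<bar>t ^ n / fact n * r n\<bar>)"
  shows "(\<lambda>n. t ^ n / fact n * (\<Sum>i\<le>n. of_nat (n choose i) * x ^ (n - i) * r i))
           sums (exp (x * t) * (\<Sum>n. t ^ n / fact n * r n))"
proof -
  define a where "a = (\<lambda>n. t ^ n / fact n * r n)"
  define b where "b = (\<lambda>n. (x * t) ^ n / fact n :: real)"
  have "summable (\<lambda>n. norm (b n))"
    using summable_exp[of "\<bar>x * t\<bar>"]
    by (simp add: b_def abs_mult power_abs divide_inverse mult.commute)
  then have "(\<lambda>n. \<Sum>i\<le>n. a i * b (n - i)) sums (suminf a * suminf b)"
    using summable by (intro Cauchy_product_sums) (simp_all add: a_def)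
  moreover have "suminf b = exp (x * t)"
    using exp_converges[of "x * t"] by (simp add: b_def sums_iff divide_inverse mult.commute)
  moreover have "(\<Sum>i\<le>n. a i * b (n - i)) =
      t ^ n / fact n * (\<Sum>i\<le>n. of_nat (n choose i) * x ^ (n - i) * r i)" for n
    unfolding sum_distrib_left
  proof (rule sum.cong[OF refl])
    fix i assume "i \<in> {..n}"
    then have i: "i \<le> n" by simp
    then have "t ^ n = t ^ i * t ^ (n - i)"
      by (simp add: power_add[symmetric])
    then show "a i * b (n - i) = t ^ n / fact n * (of_nat (n choose i) * x ^ (n - i) * r i)"
      by (simp add: a_def b_def binomial_fact[OF i] power_mult_distrib divide_simps)
  qed
  ultimately show ?thesis
    by (simp add: a_def mult.commute)
qed

definition mat_vec :: "nat \<Rightarrow> (nat \<Rightarrow> nat \<Rightarrow> real) \<Rightarrow> (nat \<Rightarrow> real) \<Rightarrow> nat \<Rightarrow> real" where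
  "mat_vec k q v = (\<lambda>j. \<Sum>l<k. q j l * v l)"

definition shifted_mat_vec ::
    "nat \<Rightarrow> (nat \<Rightarrow> nat \<Rightarrow> real) \<Rightarrow> real \<Rightarrow> (nat \<Rightarrow> real) \<Rightarrow> nat \<Rightarrow> real" where
  "shifted_mat_vec k q c v = (\<lambda>j. mat_vec k q v j + c * v j)"

definition exp_mat_vec :: "real \<Rightarrow> nat \<Rightarrow> (nat \<Rightarrow> nat \<Rightarrow> real) \<Rightarrow> (nat \<Rightarrow> real) \<Rightarrow> nat \<Rightarrow> real" where
  "exp_mat_vec t k q v j = (\<Sum>n. t ^ n / fact n * (mat_vec k q ^^ n) v j)"

lemma mat_vec_sum:
  "mat_vec k q (\<lambda>j. \<Sum>i\<in>I. f i * g i j) j = (\<Sum>i\<in>I. f i * mat_vec k q (g i) j)"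
  unfolding mat_vec_def
  by (simp add: sum_distrib_left sum_distrib_right algebra_simps) (rule sum.swap)

lemma sum_mat_vec_eq_0:
  assumes "\<forall>l<k. (\<Sum>j<k. q j l) = 0"
  shows "(\<Sum>j<k. mat_vec k q v j) = 0"
proof -
  have "(\<Sum>j<k. mat_vec k q v j) = (\<Sum>l<k. (\<Sum>j<k. q j l) * v l)"
    unfolding mat_vec_def by (simp add: sum_distrib_right) (rule sum.swap)
  with assms show ?thesis
    by simp
qed

lemma sum_funpow_mat_vec:
  assumes "\<forall>l<k. (\<Sum>j<k. q j l) = 0"
  shows "(\<Sum>j<k. (mat_vec k q ^^ n) v j) = (if n = 0 then (\<Sum>j<k. v j) else 0)"
  using sum_mat_vec_eq_0[OF assms] by (cases n) simp_all

lemma sum_funpow_shifted_mat_vec: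
  assumes "\<forall>l<k. (\<Sum>j<k. q j l) = 0"
  shows "(\<Sum>j<k. (shifted_mat_vec k q c ^^ n) v j) = c ^ n * (\<Sum>j<k. v j)"
proof (induction n)
  case 0
  then show ?case by simp
next
  case (Suc n)
  have "(\<Sum>j<k. (shifted_mat_vec k q c ^^ Suc n) v j) =
      (\<Sum>j<k. mat_vec k q ((shifted_mat_vec k q c ^^ n) v) j)
      + c * (\<Sum>j<k. (shifted_mat_vec k q c ^^ n) v j)"
    by (simp add: shifted_mat_vec_def sum.distrib sum_distrib_left)
  with Suc show ?case
    by (simp add: sum_mat_vec_eq_0[OF assms])
qed

lemma funpow_shifted_mat_vec_nonneg:
  assumes off_diag: "\<forall>i<k. \<forall>j<k. i \<noteq> j \<longrightarrow> 0 \<le> q i j"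
    and diag: "\<forall>j<k. 0 \<le> q j j + c" and v: "\<forall>j<k. 0 \<le> v j"
  shows "\<forall>j<k. 0 \<le> (shifted_mat_vec k q c ^^ n) v j"
proof (induction n)
  case 0
  then show ?case using v by simp
next
  case (Suc n)
  let ?w = "(shifted_mat_vec k q c ^^ n) v"
  show ?case
  proof (intro allI impI)
    fix j assume j: "j < k"
    have "(shifted_mat_vec k q c ^^ Suc n) v j =
        (\<Sum>l\<in>{..<k} - {j}. q j l * ?w l) + (q j j + c) * ?w j"
      using j by (simp add: shifted_mat_vec_def mat_vec_def sum.remove[of "{..<k}" j] algebra_simps)
    also have "0 \<le> \<dots>"
      using off_diag diag Suc j
      by (intro add_nonneg_nonneg sum_nonneg) (auto intro: mult_nonneg_nonneg)
    finally show "0 \<le> (shifted_mat_vec k q c ^^ Suc n) v j" .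
  qed
qed

lemma funpow_mat_vec_binomial:
  "(mat_vec k q ^^ n) v j =
     (\<Sum>i\<le>n. of_nat (n choose i) * (- c) ^ (n - i) * (shifted_mat_vec k q c ^^ i) v j)"
proof (induction n arbitrary: j)
  case 0
  then show ?case by simp
next
  case (Suc n)
  have "(mat_vec k q ^^ n) v = (\<lambda>j.
      \<Sum>i\<le>n. of_nat (n choose i) * (- c) ^ (n - i) * (shifted_mat_vec k q c ^^ i) v j)"
    using Suc by (simp add: fun_eq_iff)
  then have "(mat_vec k q ^^ Suc n) v j = mat_vec k q (\<lambda>j.
      \<Sum>i\<le>n. of_nat (n choose i) * (- c) ^ (n - i) * (shifted_mat_vec k q c ^^ i) v j) j"
    by simp
  also have "\<dots> = (\<Sum>i\<le>n. of_nat (n choose i) * (- c) ^ (n - i) *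
      ((shifted_mat_vec k q c ^^ Suc i) v j + (- c) * (shifted_mat_vec k q c ^^ i) v j))"
    by (simp add: mat_vec_sum shifted_mat_vec_def)
  also have "\<dots> = (\<Sum>i\<le>Suc n. of_nat (Suc n choose i) * (- c) ^ (Suc n - i) *
      (shifted_mat_vec k q c ^^ i) v j)"
    by (rule sum_binomial_Suc)
  finally show ?case .
qed

lemma exp_mat_vec_sums_nonneg:
  assumes Q: "Q_matrix k q" and v: "\<forall>j<k. 0 \<le> v j" and t: "0 \<le> t" and j: "j < k"
  shows "(\<lambda>n. t ^ n / fact n * (mat_vec k q ^^ n) v j) sums exp_mat_vec t k q v j"
    and "0 \<le> exp_mat_vec t k q v j"
proof -
  define c where "c = (\<Sum>i<k. \<bar>q i i\<bar>)"
  define r where "r n = (shifted_mat_vec k q c ^^ n) v j" for n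
  have col_sums: "\<forall>l<k. (\<Sum>j<k. q j l) = 0"
    using Q unfolding Q_matrix_def by blast
  have "\<forall>j<k. \<bar>q j j\<bar> \<le> c"
    unfolding c_def by (auto intro: member_le_sum[where f = "\<lambda>i. \<bar>q i i\<bar>"])
  then have shifted_nonneg: "\<forall>j<k. 0 \<le> (shifted_mat_vec k q c ^^ n) v j" for n
    using Q v unfolding Q_matrix_def by (intro funpow_shifted_mat_vec_nonneg) force+
  then have r_nonneg: "0 \<le> r n" for n
    using j by (simp add: r_def)
  have "r n \<le> (\<Sum>j<k. (shifted_mat_vec k q c ^^ n) v j)" for n
    unfolding r_def using j shifted_nonneg by (intro member_le_sum) auto
  then have r_le: "r n \<le> c ^ n * (\<Sum>j<k. v j)" for n
    by (simp add: sum_funpow_shifted_mat_vec[OF col_sums])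
  have exp_bound: "summable (\<lambda>n. (c * t) ^ n / fact n * (\<Sum>j<k. v j))"
    using summable_exp[of "c * t"] by (simp add: divide_inverse mult.commute summable_mult2)
  have summable: "summable (\<lambda>n. \<bar>t ^ n / fact n * r n\<bar>)"
  proof (rule summable_comparison_test'[OF exp_bound])
    fix n
    have "norm \<bar>t ^ n / fact n * r n\<bar> = t ^ n / fact n * r n"
      using r_nonneg t by simp
    also have "\<dots> \<le> t ^ n / fact n * (c ^ n * (\<Sum>j<k. v j))"
      using r_le t by (intro mult_left_mono) auto
    also have "\<dots> = (c * t) ^ n / fact n * (\<Sum>j<k. v j)"
      by (simp add: power_mult_distrib)
    finally show "norm \<bar>t ^ n / fact n * r n\<bar> \<le> (c * t) ^ n / fact n * (\<Sum>j<k. v j)" .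
  qed
  from sums_exp_binomial_transform[OF summable, of "- c"]
  have "(\<lambda>n. t ^ n / fact n * (mat_vec k q ^^ n) v j)
          sums (exp (- c * t) * (\<Sum>n. t ^ n / fact n * r n))"
    by (simp add: funpow_mat_vec_binomial[where c = c] r_def)
  moreover have "0 \<le> (\<Sum>n. t ^ n / fact n * r n)"
    using summable r_nonneg t
    by (intro suminf_nonneg) (auto simp: summable_rabs_cancel)
  ultimately show "(\<lambda>n. t ^ n / fact n * (mat_vec k q ^^ n) v j) sums exp_mat_vec t k q v j"
    and "0 \<le> exp_mat_vec t k q v j"
    by (auto simp: exp_mat_vec_def sums_iff)
qed

lemma sum_exp_mat_vec:
  assumes "\<forall>l<k. (\<Sum>j<k. q j l) = 0"
    and "\<forall>j<k. summable (\<lambda>n. t ^ n / fact n * (mat_vec k q ^^ n) v j)"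
  shows "(\<Sum>j<k. exp_mat_vec t k q v j) = (\<Sum>j<k. v j)"
proof -
  have "(\<Sum>j<k. exp_mat_vec t k q v j) = (\<Sum>n. t ^ n / fact n * (\<Sum>j<k. (mat_vec k q ^^ n) v j))"
    unfolding exp_mat_vec_def using assms(2)
    by (subst suminf_sum[symmetric]) (simp_all add: sum_distrib_left)
  also have "\<dots> = (\<Sum>n. if n = 0 then (\<Sum>j<k. v j) else 0)"
    by (rule arg_cong[where f = suminf]) (simp add: fun_eq_iff sum_funpow_mat_vec[OF assms(1)])
  also have "\<dots> = (\<Sum>j<k. v j)"
    by (rule sums_unique[symmetric]) (rule sums_single)
  finally show ?thesis .
qed

lemma linear_matrix_sandwich: "linear (\<lambda>X::'d::finite cmat. A ** X ** B)"
  by (rule linearI)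
    (simp_all add: vec_eq_iff matrix_matrix_mult_def sum_distrib_left sum_distrib_right
      algebra_simps sum.distrib scaleR_sum_right)

lemma linear_cscale: "linear (cscale c :: 'd::finite cmat \<Rightarrow> 'd cmat)"
  by (rule linearI) (simp_all add: vec_eq_iff cscale_def algebra_simps)

lemma linear_sum_list_map:
  "(\<And>A. linear (f A)) \<Longrightarrow> linear (\<lambda>X. sum_list (map (\<lambda>A. f A X) As))"
  by (induction As) (auto intro: linear_compose_add linear_zero)

lemma linear_lindbladian:
  assumes "lindbladian (L::'d::finite superop)"
  shows "linear L"
proof -
  obtain H Ls where L: "L = (\<lambda>\<rho>. cscale (- \<i>) (H ** \<rho> ** mat 1 - mat 1 ** \<rho> ** H) +
      sum_list (map (\<lambda>A. A ** \<rho> ** adj A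
        - (1/2::real) *\<^sub>R (adj A ** A ** \<rho> ** mat 1 + mat 1 ** \<rho> ** (adj A ** A))) Ls))"
    using assms unfolding lindbladian_def by (auto simp: matrix_mul_rid matrix_mul_lid)
  have "linear (\<lambda>\<rho>::'d cmat. cscale (- \<i>) (H ** \<rho> ** mat 1 - mat 1 ** \<rho> ** H))"
    using linear_compose[OF linear_compose_sub[OF linear_matrix_sandwich linear_matrix_sandwich]
        linear_cscale]
    by (simp only: o_def)
  moreover have "linear (\<lambda>\<rho>::'d cmat. A ** \<rho> ** adj A
      - (1/2::real) *\<^sub>R (adj A ** A ** \<rho> ** mat 1 + mat 1 ** \<rho> ** (adj A ** A)))" for A
    by (intro linear_compose_sub linear_compose_scale_right linear_compose_add linear_matrix_sandwich)
  ultimately show ?thesis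
    unfolding L by (intro linear_compose_add linear_sum_list_map)
qed

lemma funpow_linear_intertwined:
  fixes L :: "'a::real_vector \<Rightarrow> 'a"
  assumes L: "linear L" and intertwined: "\<forall>i<k. L (e i) = (\<Sum>j<k. q j i *\<^sub>R e j)"
  shows "(L ^^ n) (\<Sum>i<k. v i *\<^sub>R e i) = (\<Sum>j<k. (mat_vec k q ^^ n) v j *\<^sub>R e j)"
proof (induction n)
  case 0
  then show ?case by simp
next
  case (Suc n)
  let ?w = "(mat_vec k q ^^ n) v"
  have "(L ^^ Suc n) (\<Sum>i<k. v i *\<^sub>R e i) = (\<Sum>i<k. ?w i *\<^sub>R (\<Sum>j<k. q j i *\<^sub>R e j))"
    using Suc intertwined by (simp add: linear_sum[OF L] linear_scale[OF L])
  also have "\<dots> = (\<Sum>i<k. \<Sum>j<k. (q j i * ?w i) *\<^sub>R e j)"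
    by (simp add: scaleR_sum_right mult.commute)
  also have "\<dots> = (\<Sum>j<k. \<Sum>i<k. (q j i * ?w i) *\<^sub>R e j)"
    by (rule sum.swap)
  also have "\<dots> = (\<Sum>j<k. mat_vec k q ?w j *\<^sub>R e j)"
    by (simp add: mat_vec_def scaleR_sum_left)
  finally show ?case by simp
qed

lemma exp_series_linear_intertwined:
  fixes L :: "'a::real_normed_vector \<Rightarrow> 'a"
  assumes "linear L" and "\<forall>i<k. L (e i) = (\<Sum>j<k. q j i *\<^sub>R e j)"
    and "\<forall>j<k. summable (\<lambda>n. t ^ n / fact n * (mat_vec k q ^^ n) v j)"
  shows "(\<lambda>n. (t ^ n / fact n) *\<^sub>R (L ^^ n) (\<Sum>i<k. v i *\<^sub>R e i))
           sums (\<Sum>j<k. exp_mat_vec t k q v j *\<^sub>R e j)"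
  unfolding funpow_linear_intertwined[OF assms(1,2)] scaleR_sum_right scaleR_scaleR
  using assms(3) by (intro sums_sum sums_scaleR_left) (simp add: exp_mat_vec_def summable_sums)

theorem lemma1:
  fixes L :: "'d::finite superop"
    and E :: "nat \<Rightarrow> 'd superop"
    and k :: nat
    and q :: "nat \<Rightarrow> nat \<Rightarrow> real"
  assumes "lindbladian L"
    and "\<forall>i<k. quantum_channel (E i)"
    and "lin_indep_superops k E"
    and "in_conv (\<lambda>X. X) k E"
    and "Q_matrix k q"
    and "\<forall>i<k. \<forall>X. L (E i X) = (\<Sum>j<k. q j i *\<^sub>R E j X)"
  shows "\<forall>t\<ge>0. in_conv (sgexp t L) k E"
proof (intro allI impI)
  fix t :: real
  assume "0 \<le> t"
  obtain p where p_nonneg: "\<forall>i<k. 0 \<le> p i" and p_sum: "(\<Sum>i<k. p i) = 1"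
    and identity: "\<forall>X. X = (\<Sum>i<k. p i *\<^sub>R E i X)"
    using assms(4) unfolding in_conv_def by auto
  have col_sums: "\<forall>l<k. (\<Sum>j<k. q j l) = 0"
    using assms(5) unfolding Q_matrix_def by blast
  have summable: "\<forall>j<k. summable (\<lambda>n. t ^ n / fact n * (mat_vec k q ^^ n) p j)"
    using exp_mat_vec_sums_nonneg(1)[OF assms(5) p_nonneg \<open>0 \<le> t\<close>] sums_summable by blast
  have "sgexp t L X = (\<Sum>j<k. exp_mat_vec t k q p j *\<^sub>R E j X)" for X
    using exp_series_linear_intertwined[OF linear_lindbladian[OF assms(1)] _ summable,
        of "\<lambda>i. E i X"] assms(6)
    unfolding identity[rule_format, of X, symmetric] sgexp_def
    by (simp add: sums_iff)
  moreover have "\<forall>j<k. 0 \<le> exp_mat_vec t k q p j"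
    using exp_mat_vec_sums_nonneg(2)[OF assms(5) p_nonneg \<open>0 \<le> t\<close>] by blast
  moreover have "(\<Sum>j<k. exp_mat_vec t k q p j) = 1"
    using sum_exp_mat_vec[OF col_sums summable] p_sum by simp
  ultimately show "in_conv (sgexp t L) k E"
    unfolding in_conv_def by blast
qed

end
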